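(* For every $k\in\mathbb{N}$ and every $\epsilon\ge 0$, $$\Pr\{\chi^2_k\ge k(1+\epsilon)\}\ \ge\ \frac{1}{3\sqrt{k}\,\epsilon+6}\exp\left(-\frac{k\epsilon}{2}\right),$$ where $\chi^2_k$ denotes a chi-square random variable with $k$ degrees of freedom. *)

theory Defs
  imports "HOL-Probability.Probability"
begin

text \<open>A chi-square random variable with k degrees of freedom is, by definition,
  the sum of squares of k independent standard normal random variables.\<close>

definition chi_square_rv :: "'a measure \<Rightarrow> nat \<Rightarrow> (nat \<Rightarrow> 'a \<Rightarrow> real) \<Rightarrow> bool" where
  "chi_square_rv M k X \<longleftrightarrow>
     prob_space M \<and>
     prob_space.indep_vars M (\<lambda>_. borel) X {..<k} \<and>
     (\<forall>i<k. distributed M lborel (X i) (\<lambda>x. ennreal (std_normal_density x)))"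

end

theory Submission
  imports Defs "HOL-Library.Discrete_Functions"
begin

text \<open>
  For \<open>k = 0\<close> the event is certain.  For \<open>k = 1\<close> we compute the density \<open>chi1\<close> of \<open>X^2\<close>
  and bound it from below on the window \<open>[1 + \<epsilon>, 4 + \<epsilon>]\<close>.  For \<open>k \<ge> 2\<close> let
  \<open>m = k div 2\<close>.  The convolution of \<open>chi1\<close> with itself is an arcsine integral and gives
  the exponential density of rate \<open>1/2\<close>, so \<open>\<Sum>i<2m. X_i^2\<close> is Erlang distributed and its
  tail at \<open>t\<close> is the Poisson probability \<open>exp(-t/2) \<Sum>n<m. (t/2)^n/n!\<close>.  An elementary
  estimate \<open>exp(-m) \<Sum>n<m. m^n/n! \<ge> e^(1/2)/6\<close>, obtained from the Stirling-type bound
  \<open>m! \<le> e \<surd>m (m/e)^m\<close> and the top \<open>\<lfloor>\<surd>(2m)\<rfloor>\<close> terms of the sum, then yields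
  the bound \<open>exp(-k\<epsilon>/2)/6\<close>, which is stronger than required.
\<close>

text \<open>A sharp-enough lower bound for the logarithm, the only analytic input of the
  Stirling-type estimate below.\<close>
lemma ln_one_plus_ge:
  fixes x :: real assumes "0 \<le> x"
  shows "2 * x / (2 + x) \<le> ln (1 + x)"
proof -
  let ?f = "\<lambda>x::real. ln (1 + x) - 2 * x / (2 + x)"
  have "?f 0 \<le> ?f x"
  proof (rule DERIV_nonneg_imp_nondecreasing[OF assms])
    fix t :: real assume t: "0 \<le> t" "t \<le> x"
    have "(?f has_real_derivative (1 / (1 + t) - 4 / (2 + t)^2)) (at t)"
      using t by (auto intro!: derivative_eq_intros simp: field_simps power2_eq_square)
    moreover have "4 * (1 + t) \<le> (2 + t)^2"
      by (simp add: power2_eq_square algebra_simps)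
    then have "4 / (2 + t)^2 \<le> 1 / (1 + t)"
      using t by (simp add: divide_simps)
    ultimately show "\<exists>y. (?f has_real_derivative y) (at t) \<and> 0 \<le> y" by auto
  qed
  then show ?thesis by simp
qed

text \<open>The induction step of the Stirling bound: \<open>e \<le> (1 + 1/m) powr (m + 1/2)\<close>,
  written without powers of real exponent.\<close>
lemma stirling_step:
  fixes m :: nat assumes "m \<ge> 1"
  shows "exp 1 * sqrt (real m) * real m ^ m \<le> sqrt (real m + 1) * (real m + 1) ^ m"
proof -
  define u where "u = 1 + 1 / real m"
  have m0: "real m > 0" and u0: "u > 0" using assms by (auto simp: u_def add_pos_nonneg)
  have "2 * (1 / real m) / (2 + 1 / real m) \<le> ln u"
    unfolding u_def by (rule ln_one_plus_ge) simp
  then have "1 \<le> (real m + 1/2) * ln u"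
    using m0 by (simp add: field_simps)
  then have "exp 1 \<le> exp ((real m + 1/2) * ln u)" by simp
  also have "\<dots> = u powr (real m + 1/2)"
    using u0 by (simp add: powr_def)
  also have "\<dots> = u ^ m * sqrt u"
    using u0 by (simp add: powr_add powr_realpow powr_half_sqrt)
  also have "\<dots> = ((real m + 1) ^ m / real m ^ m) * (sqrt (real m + 1) / sqrt (real m))"
    using m0 by (simp add: u_def field_simps power_divide real_sqrt_divide)
  finally show ?thesis using m0 by (simp add: field_simps)
qed

lemma fact_le_stirling:
  fixes m :: nat assumes "m \<ge> 1"
  shows "fact m \<le> exp 1 * sqrt (real m) * real m ^ m / exp (real m)"
  using assms
proof (induction m rule: nat_induct_at_least)
  case base
  then show ?case by simp
next
  case (Suc n)
  have "fact (Suc n) = (real n + 1) * fact n" by simp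
  also have "\<dots> \<le> (real n + 1) * (exp 1 * sqrt (real n) * real n ^ n) / exp (real n)"
    using mult_left_mono[OF Suc.IH, of "real n + 1"] by simp
  also have "\<dots> \<le> (real n + 1) * (sqrt (real n + 1) * (real n + 1) ^ n) / exp (real n)"
    using stirling_step[OF Suc.hyps] by (intro divide_right_mono mult_left_mono) auto
  also have "\<dots> = exp 1 * sqrt (real (Suc n)) * real (Suc n) ^ Suc n / exp (real (Suc n))"
    by (simp add: exp_add field_simps)
  finally show ?case .
qed

lemma exp_series_term_pred:
  fixes x :: real and j :: nat assumes "x \<noteq> 0" "j \<ge> 1"
  shows "x ^ (j - 1) / fact (j - 1) = (x ^ j / fact j) * real j / x"
proof -
  obtain q where j: "j = Suc q" using assms by (cases j) auto
  have "fact q > (0::real)" "real q + 1 > 0" by auto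
  then show ?thesis
    using assms unfolding j by (simp add: divide_simps)
qed

text \<open>The largest term of \<open>\<Sum>n<m. m^n/n!\<close> is \<open>m^(m-1)/(m-1)! = m^m/m!\<close>; the term
  \<open>i\<close> places below it is at least \<open>1 - i(i+1)/(2m)\<close> times \<open>m^m/m!\<close>.\<close>
lemma exp_series_term_lower:
  fixes m i :: nat assumes m: "m \<ge> 1" and i: "i < m"
  shows "(real m ^ m / fact m) * (1 - real i * (real i + 1) / (2 * real m))
           \<le> real m ^ (m - 1 - i) / fact (m - 1 - i)"
  using i
proof (induction i)
  case 0
  then show ?case
    using exp_series_term_pred[of "real m" m] m by simp
next
  case (Suc i)
  let ?C = "real m ^ m / fact m"
  let ?b = "1 - real i * (real i + 1) / (2 * real m)"
  let ?T = "real m ^ (m - 1 - i) / fact (m - 1 - i)"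
  have m0: "real m > 0" using m by simp
  have step: "real m ^ (m - 1 - Suc i) / fact (m - 1 - Suc i) = ?T * (1 - (real i + 1) / real m)"
  proof -
    have "real m ^ (m - 1 - i - 1) / fact (m - 1 - i - 1) = ?T * real (m - 1 - i) / real m"
      using Suc.prems m0 by (intro exp_series_term_pred) auto
    moreover have "real (m - 1 - i) = real m - (real i + 1)"
      using Suc.prems by (simp add: of_nat_diff)
    ultimately show ?thesis using m0 by (simp add: field_simps)
  qed
  have b_le: "?b \<le> 1" using m0 by simp
  have "?C * (1 - real (Suc i) * (real (Suc i) + 1) / (2 * real m))
        = ?C * (?b - (real i + 1) / real m)"
    using m0 by (simp add: field_simps)
  also have "\<dots> \<le> ?C * (?b * (1 - (real i + 1) / real m))"
    using mult_right_mono[OF b_le, of "(real i + 1) / real m"]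
    by (intro mult_left_mono) (auto simp: right_diff_distrib)
  also have "\<dots> = (?C * ?b) * (1 - (real i + 1) / real m)" by simp
  also have "\<dots> \<le> ?T * (1 - (real i + 1) / real m)"
    using Suc m0 by (intro mult_right_mono) (auto simp: field_simps)
  finally show ?case unfolding step .
qed

text \<open>Closed form of \<open>\<Sum>i<N. i(i+1)\<close>, the total loss in \<open>exp_series_term_lower\<close>.\<close>
lemma sum_consecutive_products:
  "(\<Sum>i<N. real i * (real i + 1)) = (real N - 1) * real N * (real N + 1) / 3"
  by (induction N) (auto simp: field_simps)

lemma exp_series_partial_lower:
  fixes m N :: nat assumes m: "m \<ge> 1" and N: "N \<le> m"
  shows "(real m ^ m / fact m) * (real N - (real N - 1) * real N * (real N + 1) / (6 * real m))
           \<le> (\<Sum>n<m. real m ^ n / fact n)"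
proof -
  let ?T = "\<lambda>n. real m ^ n / fact n"
  let ?C = "real m ^ m / fact m"
  have "(\<Sum>i<N. 1 - real i * (real i + 1) / (2 * real m))
        = real N - (\<Sum>i<N. real i * (real i + 1)) / (2 * real m)"
    by (simp add: sum_subtractf sum_divide_distrib)
  then have "?C * (real N - (real N - 1) * real N * (real N + 1) / (6 * real m))
        = (\<Sum>i<N. ?C * (1 - real i * (real i + 1) / (2 * real m)))"
    by (simp only: sum_distrib_left[symmetric] sum_consecutive_products) simp
  also have "\<dots> \<le> (\<Sum>i<N. ?T (m - 1 - i))"
    using N by (intro sum_mono exp_series_term_lower[OF m]) auto
  also have "\<dots> = (\<Sum>n\<in>(\<lambda>i. m - 1 - i) ` {..<N}. ?T n)"
    using N by (subst sum.reindex) (auto simp: inj_on_def)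
  also have "\<dots> \<le> (\<Sum>n<m. ?T n)"
    using m by (intro sum_mono2) auto
  finally show ?thesis .
qed

text \<open>An elementary cubic estimate, used with \<open>s = N^2/m\<close>.\<close>
lemma cubic_lower_bound:
  fixes s :: real assumes "8/9 \<le> s" "s \<le> 2"
  shows "2013/100 \<le> s * (6 - s)^2"
proof -
  have key: "a * b^2 \<le> s * (6 - s)^2" if "a \<le> s" "0 \<le> a" "0 \<le> b" "b \<le> 6 - s" for a b :: real
    using that by (intro mult_mono power_mono) auto
  consider "s \<le> 1" | "1 \<le> s" "s \<le> 6/5" | "6/5 \<le> s" "s \<le> 3/2" | "3/2 \<le> s" by linarith
  then show ?thesis
  proof cases
    case 1 then show ?thesis using key[of "8/9" 5] assms by (simp add: power2_eq_square)
  next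
    case 2 then show ?thesis using key[of 1 "24/5"] by (simp add: power2_eq_square)
  next
    case 3 then show ?thesis using key[of "6/5" "9/2"] by (simp add: power2_eq_square)
  next
    case 4 then show ?thesis using key[of "3/2" 4] assms by (simp add: power2_eq_square)
  qed
qed

lemma exp_three_le: "exp (3::real) \<le> 2013/100"
proof -
  have "exp (3::real) = exp 1 ^ 3" by (simp flip: exp_of_nat_mult)
  also have "\<dots> \<le> (272/100) ^ 3" using e_less_272 by (intro power_mono) auto
  finally show ?thesis by (simp add: power3_eq_cube)
qed

lemma floor_sqrt_double_bounds:
  fixes m :: nat assumes m: "m \<ge> 1" and N: "N = floor_sqrt (2 * m)"
  shows "1 \<le> N" "N \<le> m" "8/9 \<le> real N ^ 2 / real m" "real N ^ 2 / real m \<le> 2"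
proof -
  have sq_le: "N^2 \<le> 2 * m" and lt_sq: "2 * m < (N + 1)^2"
    unfolding N using floor_sqrt_power2_le Suc_floor_sqrt_power2_gt by auto
  show N1: "1 \<le> N" using m unfolding N by (simp add: Suc_le_eq)
  have m0: "real m > 0" using m by simp
  show "N \<le> m"
  proof (cases "N = 1")
    case False
    then have "2 * N \<le> N * N" using N1 by (intro mult_right_mono) auto
    with sq_le show ?thesis unfolding power2_eq_square by linarith
  qed (use m in simp)
  have "real (N^2) \<le> real (2 * m)" using sq_le by (simp only: of_nat_le_iff)
  then show "real N ^ 2 / real m \<le> 2" using m0 by (simp add: divide_simps)
  show "8/9 \<le> real N ^ 2 / real m"
  proof (cases "N = 1")
    case True
    then have "m = 1" using lt_sq m by (simp add: power2_eq_square)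
    then show ?thesis using True by simp
  next
    case False
    then have "2 \<le> real N" using N1 by simp
    have "real (2 * m) < real ((N + 1)^2)" using lt_sq by (simp only: of_nat_less_iff)
    then have "2 * real m < (real N + 1)^2" by (simp add: add.commute)
    also have "\<dots> \<le> (3/2 * real N)^2" using \<open>2 \<le> real N\<close> by (intro power_mono) auto
    also have "\<dots> = 9/4 * real N ^ 2" by (simp add: power2_eq_square)
    finally have "2 * real m < 9/4 * real N ^ 2" .
    then show ?thesis using m0 by (simp add: divide_simps)
  qed
qed

text \<open>Writing \<open>s = N^2/m\<close>, \<open>6N - N^3/m = N(6 - s)\<close> and \<open>N^2(6 - s)^2 = m s (6 - s)^2\<close>.\<close>
lemma window_sum_lower:
  fixes m :: nat assumes m: "m \<ge> 1" and N: "N = floor_sqrt (2 * m)"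
  shows "exp (3/2) * sqrt (real m) \<le> 6 * (real N - (real N - 1) * real N * (real N + 1) / (6 * real m))"
proof -
  define n x s where "n = real N" and "x = real m" and "s = n^2 / x"
  have x0: "x > 0" and n1: "1 \<le> n" and s1: "8/9 \<le> s" and s2: "s \<le> 2"
    using m floor_sqrt_double_bounds[OF m N] by (auto simp: n_def x_def s_def)
  have cube: "n * (6 - s) \<le> 6 * (n - (n - 1) * n * (n + 1) / (6 * x))"
  proof -
    have "(n - 1) * n * (n + 1) / x \<le> n^3 / x"
      using n1 x0 by (intro divide_right_mono) (auto simp: algebra_simps power3_eq_cube)
    moreover have "n * (6 - s) = 6 * n - n^3 / x"
      by (simp add: s_def algebra_simps power3_eq_cube power2_eq_square)
    ultimately show ?thesis by simp
  qed
  have "exp 3 * x \<le> x * (s * (6 - s)^2)"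
    using exp_three_le cubic_lower_bound[OF s1 s2] x0 by (simp add: mult.commute)
  also have "\<dots> = (x * s) * (6 - s)^2" by (simp add: mult.assoc)
  also have "\<dots> = (n * (6 - s))^2"
    using x0 by (simp add: s_def power_mult_distrib)
  finally have "sqrt (exp 3 * x) \<le> sqrt ((n * (6 - s))^2)"
    by (rule real_sqrt_le_mono)
  then have "sqrt (exp 3 * x) \<le> n * (6 - s)"
    using n1 s2 by simp
  moreover have "sqrt (exp 3 * x) = exp (3/2) * sqrt x"
  proof -
    have "sqrt (exp 3) = exp (3/2)"
      by (rule real_sqrt_unique) (simp_all add: power2_eq_square flip: exp_add)
    then show ?thesis by (simp add: real_sqrt_mult)
  qed
  ultimately show ?thesis using cube unfolding n_def x_def by linarith
qed

lemma poisson_below_mean: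
  fixes m :: nat assumes m: "m \<ge> 1"
  shows "exp (1/2) / 6 \<le> exp (- real m) * (\<Sum>n<m. real m ^ n / fact n)"
proof -
  define N where "N = floor_sqrt (2 * m)"
  define F where "F = real N - (real N - 1) * real N * (real N + 1) / (6 * real m)"
  have x0: "real m > 0" using m by simp
  have "exp (3/2::real) = exp 1 * exp (1/2)" by (simp flip: exp_add)
  then have key: "exp 1 * exp (1/2) * sqrt (real m) \<le> 6 * F"
    using window_sum_lower[OF m N_def] unfolding F_def by simp
  moreover have "0 \<le> exp 1 * exp (1/2) * sqrt (real m)" by simp
  ultimately have F0: "0 \<le> F" by linarith
  have "exp (1/2) / 6 \<le> F / (exp 1 * sqrt (real m))"
    using key x0 by (simp add: field_simps)
  also have "\<dots> = exp (- real m) * (exp (real m) / (exp 1 * sqrt (real m)) * F)"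
    by (simp add: exp_minus field_simps)
  also have "\<dots> \<le> exp (- real m) * ((real m ^ m / fact m) * F)"
  proof -
    have "exp (real m) / (exp 1 * sqrt (real m)) \<le> real m ^ m / fact m"
      using fact_le_stirling[OF m] x0 by (simp add: field_simps)
    then show ?thesis using F0 by (intro mult_left_mono mult_right_mono) auto
  qed
  also have "\<dots> \<le> exp (- real m) * (\<Sum>n<m. real m ^ n / fact n)"
    using exp_series_partial_lower[OF m floor_sqrt_double_bounds(2)[OF m N_def]]
    unfolding F_def by (intro mult_left_mono) auto
  finally show ?thesis .
qed

lemma poisson_below_shifted:
  fixes m :: nat and V :: real
  assumes m: "m \<ge> 1" and V: "real m \<le> V"
  shows "exp (real m - V) * (exp (1/2) / 6) \<le> exp (- V) * (\<Sum>n<m. V ^ n / fact n)"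
proof -
  have "exp (real m - V) * (exp (1/2) / 6)
          \<le> exp (real m - V) * (exp (- real m) * (\<Sum>n<m. real m ^ n / fact n))"
    using poisson_below_mean[OF m] by (intro mult_left_mono) auto
  also have "\<dots> = exp (- V) * (\<Sum>n<m. real m ^ n / fact n)"
    by (simp add: mult.assoc[symmetric] exp_add[symmetric])
  also have "\<dots> \<le> exp (- V) * (\<Sum>n<m. V ^ n / fact n)"
    using V by (intro mult_left_mono sum_mono divide_right_mono power_mono) auto
  finally show ?thesis .
qed

definition chi1 :: "real \<Rightarrow> real" where
  "chi1 y = (if 0 < y then exp (- y / 2) / sqrt (2 * pi * y) else 0)"

lemma chi1_nonneg [simp]: "0 \<le> chi1 y"
  by (simp add: chi1_def)

lemma chi1_measurable [measurable]: "chi1 \<in> borel_measurable borel"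
  unfolding chi1_def by measurable

text \<open>The change of variables \<open>y = x^2\<close> turns \<open>chi1\<close> into twice the normal density.\<close>
lemma chi1_square: "x > 0 \<Longrightarrow> chi1 (x^2) * (2 * x) = 2 * std_normal_density x"
proof -
  assume x: "x > 0"
  have "sqrt (2 * pi * x^2) = sqrt (2 * pi) * x" using x by (simp add: real_sqrt_mult)
  then show ?thesis using x by (simp add: chi1_def std_normal_density_def field_simps)
qed

lemma chi1_integral_square:
  fixes b :: real assumes b: "0 \<le> b"
  shows "(\<integral>\<^sup>+x. ennreal (chi1 x * indicator {0..b^2} x) \<partial>lborel) =
         2 * (\<integral>\<^sup>+x. ennreal (std_normal_density x * indicator {0..b} x) \<partial>lborel)"
proof -
  have "(\<integral>\<^sup>+x. ennreal (chi1 x * indicator {(\<lambda>x. x^2) 0..(\<lambda>x. x^2) b} x) \<partial>lborel) =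
        (\<integral>\<^sup>+x. ennreal (chi1 ((\<lambda>x. x^2) x) * (2 * x) * indicator {0..b} x) \<partial>lborel)"
  proof (rule nn_integral_substitution[where g="\<lambda>x. x^2" and g'="\<lambda>x. 2 * x"])
    show "set_borel_measurable borel {(\<lambda>x. x^2) 0..(\<lambda>x. x^2) b} chi1"
      unfolding set_borel_measurable_def by measurable
  qed (use b in \<open>auto intro!: derivative_eq_intros continuous_intros\<close>)
  also have "\<dots> = (\<integral>\<^sup>+x. ennreal (2 * std_normal_density x * indicator {0..b} x) \<partial>lborel)"
    using AE_lborel_singleton[of 0]
    by (intro nn_integral_cong_AE, eventually_elim)
       (auto simp: chi1_square indicator_def order.order_iff_strict)
  also have "\<dots> = 2 * (\<integral>\<^sup>+x. ennreal (std_normal_density x * indicator {0..b} x) \<partial>lborel)"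
    by (subst nn_integral_cmult[symmetric]) (auto simp: ennreal_mult mult.assoc)
  finally show ?thesis by simp
qed

text \<open>The standard normal density is even, so \<open>[-b, b]\<close> carries twice the mass of \<open>[0, b]\<close>.\<close>
lemma std_normal_integral_symmetric:
  fixes b :: real assumes b: "0 \<le> b"
  shows "(\<integral>\<^sup>+x. ennreal (std_normal_density x * indicator {-b..b} x) \<partial>lborel) =
         2 * (\<integral>\<^sup>+x. ennreal (std_normal_density x * indicator {0..b} x) \<partial>lborel)"
proof -
  let ?I = "\<lambda>A. (\<integral>\<^sup>+x. ennreal (std_normal_density x * indicator A x) \<partial>lborel)"
  have "?I {-b..b} = (\<integral>\<^sup>+x. ennreal (std_normal_density x * indicator {-b..0} x) +
                             ennreal (std_normal_density x * indicator {0<..b} x) \<partial>lborel)"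
    by (intro nn_integral_cong) (auto simp: indicator_def)
  also have "\<dots> = ?I {-b..0} + ?I {0<..b}"
    by (rule nn_integral_add) auto
  also have "?I {-b..0} = ?I {0..b}"
  proof -
    have "?I {-b..0} = ennreal \<bar>-1\<bar> * (\<integral>\<^sup>+x. ennreal (std_normal_density (0 + -1 * x) *
                                          indicator {-b..0} (0 + -1 * x)) \<partial>lborel)"
      by (rule nn_integral_real_affine) auto
    also have "\<dots> = ?I {0..b}"
      by (auto intro!: nn_integral_cong simp: std_normal_density_def indicator_def)
    finally show ?thesis .
  qed
  also have "?I {0<..b} = ?I {0..b}"
    using AE_lborel_singleton[of 0]
    by (intro nn_integral_cong_AE, eventually_elim) (auto simp: indicator_def)
  finally show ?thesis by (simp add: mult_2)
qed

text \<open>The square of a standard normal variable has density \<open>chi1\<close>; we compare the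
  distribution functions at every \<open>a = b^2\<close>.\<close>
lemma (in prob_space) distributed_square_std_normal:
  assumes D: "distributed M lborel X (\<lambda>x. ennreal (std_normal_density x))"
  shows "distributed M lborel (\<lambda>\<omega>. (X \<omega>)^2) (\<lambda>y. ennreal (chi1 y))"
proof -
  have [measurable]: "X \<in> borel_measurable M" using distributed_measurable[OF D] by simp
  show ?thesis
  proof (rule distributedI_borel_atMost[where g="\<lambda>a. measure M {x\<in>space M. (X x)^2 \<le> a}"])
    fix a :: real
    show "emeasure M {x\<in>space M. (X x)^2 \<le> a} = ennreal (measure M {x\<in>space M. (X x)^2 \<le> a})"
      by (simp add: emeasure_eq_measure)
    show "(\<integral>\<^sup>+x. ennreal (chi1 x * indicator {..a} x) \<partial>lborel)
            = ennreal (measure M {x\<in>space M. (X x)^2 \<le> a})"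
    proof (cases "a < 0")
      case True
      then have empty: "{x\<in>space M. (X x)^2 \<le> a} = {}"
        by (force dest: order_trans[OF zero_le_power2])
      have zero: "(\<integral>\<^sup>+x. ennreal (chi1 x * indicator {..a} x) \<partial>lborel) = 0"
        using True by (subst nn_integral_0_iff_AE) (auto simp: chi1_def indicator_def)
      show ?thesis by (simp only: empty zero measure_empty) simp
    next
      case False
      define b where "b = sqrt a"
      have b0: "0 \<le> b" and ab: "a = b^2" using False unfolding b_def by auto
      have "{x\<in>space M. (X x)^2 \<le> a} = X -` {-b..b} \<inter> space M"
        unfolding ab using b0 by (auto simp: abs_le_square_iff[symmetric])
      then have "emeasure M {x\<in>space M. (X x)^2 \<le> a}
                   = (\<integral>\<^sup>+x. ennreal (std_normal_density x) * indicator {-b..b} x \<partial>lborel)"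
        using distributed_emeasure[OF D] by simp
      also have "\<dots> = (\<integral>\<^sup>+x. ennreal (std_normal_density x * indicator {-b..b} x) \<partial>lborel)"
        by (intro nn_integral_cong) (simp add: indicator_def)
      also have "\<dots> = (\<integral>\<^sup>+x. ennreal (chi1 x * indicator {0..b^2} x) \<partial>lborel)"
        using std_normal_integral_symmetric[OF b0] chi1_integral_square[OF b0] by simp
      also have "\<dots> = (\<integral>\<^sup>+x. ennreal (chi1 x * indicator {..a} x) \<partial>lborel)"
        unfolding ab by (intro nn_integral_cong) (auto simp: chi1_def indicator_def)
      finally show ?thesis by (simp add: emeasure_eq_measure)
    qed
  qed auto
qed

text \<open>The arcsine integral \<open>\<integral>\<^sub>0\<^sup>x dy / \<surd>(y(x - y)) = \<pi>\<close>, via the antiderivative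
  \<open>arcsin ((2y - x)/x)\<close>.\<close>
lemma arcsine_integral:
  fixes x :: real assumes x: "x > 0"
  shows "((\<lambda>y. 1 / sqrt (y * (x - y))) has_integral pi) {0..x}"
proof -
  let ?F = "\<lambda>y. arcsin ((2 * y - x) / x)"
  have "((\<lambda>y. 1 / sqrt (y * (x - y))) has_integral (?F x - ?F 0)) {0..x}"
  proof (rule fundamental_theorem_of_calculus_interior)
    show "0 \<le> x" using x by simp
    show "continuous_on {0..x} ?F"
      using x by (intro continuous_intros) (auto simp: field_simps)
    fix y assume y: "y \<in> {0<..<x}"
    define u where "u = (2 * y - x) / x"
    have u1: "-1 < u" "u < 1" using y x unfolding u_def by (auto simp: field_simps)
    have "DERIV arcsin ((2 * y - x) / x) :> inverse (sqrt (1 - u^2))"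
      using DERIV_arcsin[OF u1] unfolding u_def .
    moreover have "((\<lambda>y. (2 * y - x) / x) has_real_derivative 2 / x) (at y)"
      using x by (auto intro!: derivative_eq_intros)
    ultimately have "(?F has_real_derivative (inverse (sqrt (1 - u^2)) * (2 / x))) (at y)"
      by (rule DERIV_chain2)
    moreover have "sqrt (1 - u^2) = 2 * sqrt (y * (x - y)) / x"
    proof -
      have "1 - u^2 = 4 * (y * (x - y)) / x^2"
        unfolding u_def using x by (simp add: power_divide divide_simps)
                                   (simp add: power2_eq_square algebra_simps)
      also have "\<dots> = (2 * sqrt (y * (x - y)) / x)^2"
        using y by (simp add: power_divide power_mult_distrib)
      finally show ?thesis using x y by simp
    qed
    moreover have "sqrt (y * (x - y)) > 0" using y by simp
    ultimately have "(?F has_real_derivative 1 / sqrt (y * (x - y))) (at y)"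
      using x by (simp add: field_simps)
    then show "(?F has_vector_derivative 1 / sqrt (y * (x - y))) (at y)"
      by (simp add: has_real_derivative_iff_has_vector_derivative)
  qed
  moreover have "?F x - ?F 0 = pi" using x by simp
  ultimately show ?thesis by simp
qed

lemma chi1_product:
  fixes y z :: real assumes "0 < y" "y < z"
  shows "chi1 (z - y) * chi1 y = exp (- z / 2) / (2 * pi) * (1 / sqrt (y * (z - y)))"
proof -
  have "sqrt (2 * pi * (z - y)) * sqrt (2 * pi * y) = sqrt ((2 * pi)^2 * (y * (z - y)))"
    by (simp only: real_sqrt_mult[symmetric]) (simp add: power2_eq_square algebra_simps)
  also have "\<dots> = 2 * pi * sqrt (y * (z - y))"
    by (simp only: real_sqrt_mult real_sqrt_abs) simp
  finally have "sqrt (2 * pi * (z - y)) * sqrt (2 * pi * y) = 2 * pi * sqrt (y * (z - y))" .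
  moreover have "exp (- (z - y) / 2) * exp (- y / 2) = exp (- z / 2)"
    by (simp flip: exp_add add: field_simps)
  ultimately show ?thesis
    using assms by (simp add: chi1_def)
qed

lemma chi1_convolution:
  fixes z :: real assumes "z \<noteq> 0"
  shows "(\<integral>\<^sup>+y. ennreal (chi1 (z - y)) * ennreal (chi1 y) \<partial>lborel)
           = ennreal (exponential_density (1/2) z)"
proof (cases "z < 0")
  case True
  then have "(\<integral>\<^sup>+y. ennreal (chi1 (z - y)) * ennreal (chi1 y) \<partial>lborel) = (\<integral>\<^sup>+(y::real). 0 \<partial>lborel)"
    by (intro nn_integral_cong) (auto simp: chi1_def)
  then show ?thesis using True by (simp add: exponential_density_def)
next
  case False
  then have z: "z > 0" using assms by simp
  define c where "c = exp (- z / 2) / (2 * pi)"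
  have c0: "c \<ge> 0" unfolding c_def by simp
  have "ennreal (chi1 (z - y)) * ennreal (chi1 y)
          = ennreal c * (ennreal (1 / sqrt (y * (z - y))) * indicator {0..z} y)" for y
  proof (cases "0 < y \<and> y < z")
    case True
    then show ?thesis
      using c0 chi1_product[of y z] by (simp add: c_def ennreal_mult[symmetric] indicator_def)
  next
    case False
    then have "y \<le> 0 \<or> z \<le> y" by auto
    then show ?thesis using z by (auto simp: chi1_def indicator_def)
  qed
  then have "(\<integral>\<^sup>+y. ennreal (chi1 (z - y)) * ennreal (chi1 y) \<partial>lborel)
        = ennreal c * (\<integral>\<^sup>+y. ennreal (1 / sqrt (y * (z - y))) * indicator {0..z} y \<partial>lborel)"
    by (simp add: nn_integral_cmult)
  also have "(\<integral>\<^sup>+y. ennreal (1 / sqrt (y * (z - y))) * indicator {0..z} y \<partial>lborel) = ennreal pi"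
    by (rule nn_integral_has_integral_lebesgue'[OF _ arcsine_integral[OF z]]) auto
  also have "ennreal c * ennreal pi = ennreal (exponential_density (1/2) z)"
    using z c0 by (simp add: c_def exponential_density_def ennreal_mult[symmetric])
  finally show ?thesis .
qed

lemma (in prob_space) sum_chi1_exponential:
  assumes indep: "indep_var borel Y1 borel Y2"
    and D1: "distributed M lborel Y1 (\<lambda>y. ennreal (chi1 y))"
    and D2: "distributed M lborel Y2 (\<lambda>y. ennreal (chi1 y))"
  shows "distributed M lborel (\<lambda>\<omega>. Y1 \<omega> + Y2 \<omega>) (\<lambda>z. ennreal (exponential_density (1/2) z))"
proof -
  have C: "distributed M lborel (\<lambda>\<omega>. Y1 \<omega> + Y2 \<omega>)
             (\<lambda>z. \<integral>\<^sup>+y. ennreal (chi1 (z - y)) * ennreal (chi1 y) \<partial>lborel)"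
    by (rule distributed_convolution[OF indep D1 D2])
  show ?thesis
  proof (subst distributed_cong_density[symmetric])
    show "AE z in lborel. (\<integral>\<^sup>+y. ennreal (chi1 (z - y)) * ennreal (chi1 y) \<partial>lborel)
                            = ennreal (exponential_density (1/2) z)"
      using AE_lborel_singleton[of 0] by eventually_elim (rule chi1_convolution, simp)
    show "(\<lambda>z. \<integral>\<^sup>+y. ennreal (chi1 (z - y)) * ennreal (chi1 y) \<partial>lborel) \<in> borel_measurable lborel"
      using distributed_borel_measurable[OF C] .
  qed (use C in simp_all)
qed

lemma (in prob_space) indep_var_squares:
  fixes X :: "'i \<Rightarrow> 'a \<Rightarrow> real"
  assumes indep: "indep_vars (\<lambda>_. borel) X I" and "i \<in> I" "j \<in> I" "i \<noteq> j"
  shows "indep_var borel (\<lambda>\<omega>. (X i \<omega>)^2) borel (\<lambda>\<omega>. (X j \<omega>)^2)"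
proof -
  have "indep_var borel ((\<lambda>f. (f i)^2) \<circ> (\<lambda>\<omega>. restrict (\<lambda>i. X i \<omega>) {i}))
                   borel ((\<lambda>f. (f j)^2) \<circ> (\<lambda>\<omega>. restrict (\<lambda>i. X i \<omega>) {j}))"
    using assms by (intro indep_var_compose[OF indep_var_restrict[OF indep]]) auto
  then show ?thesis by (simp add: comp_def)
qed

text \<open>The pair sums \<open>X_{2j}^2 + X_{2j+1}^2\<close>, \<open>j < m\<close>, are independent: they are
  functions of the disjoint blocks \<open>{2j, 2j+1}\<close> of an independent family.\<close>
lemma (in prob_space) indep_vars_pair_squares:
  fixes X :: "nat \<Rightarrow> 'a \<Rightarrow> real"
  assumes indep: "indep_vars (\<lambda>_. borel) X {..<k}" and mk: "2 * m \<le> k"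
  shows "indep_vars (\<lambda>_. borel) (\<lambda>j \<omega>. (X (2*j) \<omega>)^2 + (X (2*j+1) \<omega>)^2) {..<m}"
proof -
  define K where "K = (\<lambda>j::nat. {2*j, 2*j+1})"
  have R: "indep_vars (\<lambda>j. PiM (K j) (\<lambda>_. borel)) (\<lambda>j \<omega>. restrict (\<lambda>i. X i \<omega>) (K j)) {..<m}"
    using mk by (intro indep_vars_restrict[OF indep]) (auto simp: K_def disjoint_family_on_def)
  have "indep_vars (\<lambda>_. borel)
          (\<lambda>j \<omega>. (\<lambda>f. (f (2*j))^2 + (f (2*j+1))^2) (restrict (\<lambda>i. X i \<omega>) (K j))) {..<m}"
    by (rule indep_vars_compose2[OF R]) (auto simp: K_def)
  then show ?thesis by (simp add: K_def)
qed

lemma sum_even_odd_split: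
  fixes f :: "nat \<Rightarrow> real"
  shows "(\<Sum>i<2*m. f i) = (\<Sum>j<m. f (2*j) + f (2*j+1))"
  by (induction m) (simp_all add: sum.lessThan_Suc)

lemma (in prob_space) chi_square_even_erlang:
  fixes X :: "nat \<Rightarrow> 'a \<Rightarrow> real"
  assumes indep: "indep_vars (\<lambda>_. borel) X {..<k}"
    and D: "\<And>i. i < k \<Longrightarrow> distributed M lborel (X i) (\<lambda>x. ennreal (std_normal_density x))"
    and m: "1 \<le> m" "2 * m \<le> k"
  shows "distributed M lborel (\<lambda>\<omega>. \<Sum>i<2*m. (X i \<omega>)^2) (erlang_density (m - 1) (1/2))"
proof -
  define Z where "Z = (\<lambda>j \<omega>. (X (2*j) \<omega>)^2 + (X (2*j+1) \<omega>)^2)"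
  have "distributed M lborel (Z j) (exponential_density (1/2))" if "j \<in> {..<m}" for j
    using that m unfolding Z_def
    by (intro sum_chi1_exponential indep_var_squares[OF indep]
          distributed_square_std_normal D) auto
  moreover have "indep_vars (\<lambda>_. borel) Z {..<m}"
    unfolding Z_def by (rule indep_vars_pair_squares[OF indep m(2)])
  moreover have "0 \<in> {..<m}" using m by simp
  ultimately have "distributed M lborel (\<lambda>\<omega>. \<Sum>j\<in>{..<m}. Z j \<omega>) (erlang_density (card {..<m} - 1) (1/2))"
    by (intro exponential_distributed_sum) auto
  then show ?thesis
    by (simp add: Z_def sum_even_odd_split)
qed

lemma (in prob_space) erlang_tail:
  assumes D: "distributed M lborel S (erlang_density (m - 1) l)"
    and m: "m \<ge> 1" and l: "0 < l" and t: "0 \<le> t"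
  shows "measure M {\<omega>\<in>space M. t < S \<omega>} = exp (- (l * t)) * (\<Sum>n<m. (l * t) ^ n / fact n)"
proof -
  have "measure M {\<omega>\<in>space M. t < S \<omega>} = 1 - erlang_CDF (m - 1) l t"
    by (rule erlang_distributed_gt[OF D l t])
  also have "\<dots> = (\<Sum>n\<le>m - 1. (l * t) ^ n * exp (- l * t) / fact n)"
    using t unfolding erlang_CDF_def by simp
  also have "{..m - 1} = {..<m}" using m by auto
  finally show ?thesis
    by (simp add: sum_distrib_left field_simps)
qed

lemma exp_neg_half_ge: "100/165 \<le> exp (- 1/2 :: real)"
proof -
  have "(exp (1/2 :: real))^2 = exp 1" by (simp add: power2_eq_square flip: exp_add)
  then have "(exp (1/2 :: real))^2 \<le> (165/100)^2" using e_less_272 by (simp add: power2_eq_square)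
  then have "exp (1/2 :: real) \<le> 165/100" by (rule power2_le_imp_le) simp
  then show ?thesis by (simp add: exp_minus divide_simps)
qed

lemma exp_neg_two_le: "exp (- 2 :: real) \<le> 1/7"
proof -
  have "27/10 \<le> exp (1::real)" using e_approx_32 by (simp add: abs_if split: if_splits)
  then have "(27/10)^2 \<le> (exp (1::real))^2" by (intro power_mono) auto
  also have "\<dots> = exp 2" by (simp add: power2_eq_square flip: exp_add)
  finally show ?thesis by (simp add: exp_minus divide_simps)
qed

lemma exp_decay_integral:
  fixes a b :: real assumes "a \<le> b"
  shows "((\<lambda>y. exp (- y / 2)) has_integral 2 * (exp (- a / 2) - exp (- b / 2))) {a..b}"
proof -
  let ?F = "\<lambda>y::real. - 2 * exp (- y / 2)"
  have "((\<lambda>y. exp (- y / 2)) has_integral (?F b - ?F a)) {a..b}"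
  proof (rule fundamental_theorem_of_calculus)
    fix y assume "y \<in> {a..b}"
    show "(?F has_vector_derivative exp (- y / 2)) (at y within {a..b})"
      by (auto intro!: derivative_eq_intros simp: has_real_derivative_iff_has_vector_derivative[symmetric])
  qed (use assms in simp)
  then show ?thesis by (simp add: algebra_simps)
qed

text \<open>Numerical core of the case \<open>k = 1\<close>: the mass that the density lower bound
  \<open>exp(-y/2)/\<surd>(2\<pi>(c + 3))\<close> puts on the window \<open>[c, c + 3]\<close>, \<open>c = 1 + \<epsilon>\<close>, exceeds the target.\<close>
lemma one_degree_window_numeric:
  fixes \<epsilon> :: real assumes e: "\<epsilon> \<ge> 0"
  shows "1 / (3 * \<epsilon> + 6) * exp (- \<epsilon> / 2)
           \<le> 2 * (exp (- (1 + \<epsilon>) / 2) - exp (- (1 + \<epsilon> + 3) / 2)) / sqrt (2 * pi * (1 + \<epsilon> + 3))"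
proof -
  define E where "E = exp (- \<epsilon> / 2)"
  define s where "s = sqrt (2 * pi * (1 + \<epsilon> + 3))"
  have E0: "E > 0" unfolding E_def by simp
  have "exp (- (1 + \<epsilon>) / 2) = exp (- \<epsilon> / 2 + - 1/2)"
    and "exp (- (1 + \<epsilon> + 3) / 2) = exp (- \<epsilon> / 2 + - 2)"
    by (simp_all add: field_simps)
  then have diff: "exp (- (1 + \<epsilon>) / 2) - exp (- (1 + \<epsilon> + 3) / 2) = E * (exp (- 1/2) - exp (- 2))"
    unfolding E_def exp_add by (simp add: right_diff_distrib)
  have gap: "45/100 \<le> exp (- 1/2) - exp (- 2 :: real)"
    using exp_neg_half_ge exp_neg_two_le by simp
  have s0: "s > 0" unfolding s_def using e by simp
  have s_le: "s \<le> 251/100 * (\<epsilon> + 2)"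
  proof -
    have "2 * pi \<le> 63/10" using pi_approx(2) by simp
    then have "2 * pi * (1 + \<epsilon> + 3) \<le> 63/10 * (1 + \<epsilon> + 3)"
      using e by (intro mult_right_mono) auto
    also have "\<dots> = 63/10 * (4 + \<epsilon>)" by simp
    also have "\<dots> \<le> (251/100 * (\<epsilon> + 2))^2" using e by (simp add: power2_eq_square algebra_simps)
    finally have "s \<le> sqrt ((251/100 * (\<epsilon> + 2))^2)" unfolding s_def by (rule real_sqrt_le_mono)
    then show ?thesis using e by simp
  qed
  have "1 / (3 * \<epsilon> + 6) * E \<le> 2 * (45/100) * E / (251/100 * (\<epsilon> + 2))"
    using e E0 by (simp add: field_simps)
  also have "\<dots> \<le> 2 * (E * (exp (- 1/2) - exp (- 2))) / s"
    using gap s0 s_le E0 by (intro frac_le) auto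
  finally show ?thesis unfolding diff s_def[symmetric] E_def[symmetric] .
qed

text \<open>The case \<open>k = 1\<close>: lower bound the density \<open>chi1\<close> of \<open>X^2\<close> on \<open>[1 + \<epsilon>, 4 + \<epsilon>]\<close>.\<close>
lemma (in prob_space) std_normal_square_tail:
  assumes D: "distributed M lborel X (\<lambda>x. ennreal (std_normal_density x))" and e: "\<epsilon> \<ge> 0"
  shows "1 / (3 * \<epsilon> + 6) * exp (- \<epsilon> / 2) \<le> measure M {\<omega>\<in>space M. 1 + \<epsilon> \<le> (X \<omega>)^2}"
proof -
  define c where "c = 1 + \<epsilon>"
  define s where "s = sqrt (2 * pi * (c + 3))"
  define J where "J = 2 * (exp (- c / 2) - exp (- (c + 3) / 2)) / s"
  have c0: "c > 0" unfolding c_def using e by simp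
  have s0: "s > 0" unfolding s_def using c0 by simp
  have density_lower: "exp (- y / 2) / s \<le> chi1 y" if "y \<in> {c..c+3}" for y
  proof -
    have "sqrt (2 * pi * y) \<le> s" using that unfolding s_def by simp
    moreover have "0 < sqrt (2 * pi * y)" using that c0 by simp
    ultimately have "exp (- y / 2) / s \<le> exp (- y / 2) / sqrt (2 * pi * y)"
      using s0 by (intro divide_left_mono mult_pos_pos) auto
    then show ?thesis using that c0 by (simp add: chi1_def)
  qed
  have "ennreal J = (\<integral>\<^sup>+y. ennreal (exp (- y / 2) / s) * indicator {c..c+3} y \<partial>lborel)"
    using has_integral_divide[OF exp_decay_integral[of c "c + 3"], of s]
    using s0 by (intro nn_integral_has_integral_lebesgue'[symmetric]) (auto simp: J_def)
  also have "\<dots> \<le> (\<integral>\<^sup>+y. ennreal (chi1 y) * indicator {c..} y \<partial>lborel)"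
    using density_lower by (intro nn_integral_mono) (auto simp: indicator_def)
  also have "\<dots> = emeasure M ((\<lambda>\<omega>. (X \<omega>)^2) -` {c..} \<inter> space M)"
    by (rule distributed_emeasure[OF distributed_square_std_normal[OF D], symmetric]) simp
  also have "(\<lambda>\<omega>. (X \<omega>)^2) -` {c..} \<inter> space M = {\<omega>\<in>space M. 1 + \<epsilon> \<le> (X \<omega>)^2}"
    unfolding c_def by auto
  finally have "J \<le> measure M {\<omega>\<in>space M. 1 + \<epsilon> \<le> (X \<omega>)^2}"
    by (simp add: emeasure_eq_measure ennreal_le_iff)
  moreover have "1 / (3 * \<epsilon> + 6) * exp (- \<epsilon> / 2) \<le> J"
    using one_degree_window_numeric[OF e] unfolding J_def s_def c_def .
  ultimately show ?thesis by linarith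
qed

text \<open>The case \<open>k \<ge> 2\<close>: with \<open>m = k div 2\<close>, the event contains the event that the
  Erlang variable \<open>\<Sum>i<2m. X_i^2\<close> exceeds \<open>t = k(1 + \<epsilon>)\<close>, whose probability is the
  Poisson probability \<open>P(Poisson(t/2) < m)\<close>.\<close>
lemma (in prob_space) chi_square_tail_ge_two:
  fixes X :: "nat \<Rightarrow> 'a \<Rightarrow> real"
  assumes indep: "indep_vars (\<lambda>_. borel) X {..<k}"
    and D: "\<And>i. i < k \<Longrightarrow> distributed M lborel (X i) (\<lambda>x. ennreal (std_normal_density x))"
    and k: "2 \<le> k" and e: "\<epsilon> \<ge> 0"
  shows "exp (- real k * \<epsilon> / 2) / 6
           \<le> measure M {\<omega>\<in>space M. real k * (1 + \<epsilon>) \<le> (\<Sum>i<k. (X i \<omega>)^2)}"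
proof -
  define m where "m = k div 2"
  define t where "t = real k * (1 + \<epsilon>)"
  have m1: "1 \<le> m" and mk: "2 * m \<le> k" and km: "k \<le> 2 * m + 1" using k unfolding m_def by auto
  have t0: "0 \<le> t" unfolding t_def using e by simp
  have [measurable]: "X i \<in> borel_measurable M" if "i < k" for i
    using distributed_measurable[OF D[OF that]] by simp
  have "exp (- real k * \<epsilon> / 2) / 6 \<le> exp (real m - t/2) * (exp (1/2) / 6)"
    using km unfolding t_def by (simp add: algebra_simps flip: exp_add)
  also have "\<dots> \<le> exp (- (t/2)) * (\<Sum>n<m. (t/2) ^ n / fact n)"
  proof (rule poisson_below_shifted[OF m1])
    have "real (2 * m) \<le> real k" using mk by (simp only: of_nat_le_iff)
    moreover have "0 \<le> real k * \<epsilon>" using e by simp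
    ultimately show "real m \<le> t / 2" unfolding t_def by (simp add: algebra_simps)
  qed
  also have "\<dots> = measure M {\<omega>\<in>space M. t < (\<Sum>i<2*m. (X i \<omega>)^2)}"
    using erlang_tail[OF chi_square_even_erlang[OF indep D m1 mk] m1 _ t0] by simp
  also have "\<dots> \<le> measure M {\<omega>\<in>space M. t \<le> (\<Sum>i<k. (X i \<omega>)^2)}"
  proof (rule finite_measure_mono)
    have "(\<Sum>i<2*m. (X i \<omega>)^2) \<le> (\<Sum>i<k. (X i \<omega>)^2)" for \<omega>
      using mk by (intro sum_mono2) auto
    then show "{\<omega>\<in>space M. t < (\<Sum>i<2*m. (X i \<omega>)^2)} \<subseteq> {\<omega>\<in>space M. t \<le> (\<Sum>i<k. (X i \<omega>)^2)}"
      by (auto intro: order.trans[OF less_imp_le])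
    show "{\<omega>\<in>space M. t \<le> (\<Sum>i<k. (X i \<omega>)^2)} \<in> sets M" by measurable
  qed
  finally show ?thesis unfolding t_def .
qed

theorem mainTheorem5:
  fixes M :: "'a measure" and X :: "nat \<Rightarrow> 'a \<Rightarrow> real" and k :: nat and \<epsilon> :: real
  assumes "chi_square_rv M k X"
    and "\<epsilon> \<ge> 0"
  shows "measure M {\<omega> \<in> space M. (\<Sum>i<k. (X i \<omega>)\<^sup>2) \<ge> real k * (1 + \<epsilon>)}
           \<ge> 1 / (3 * sqrt (real k) * \<epsilon> + 6) * exp (- real k * \<epsilon> / 2)"
proof -
  interpret prob_space M using assms(1) by (simp add: chi_square_rv_def)
  have indep: "indep_vars (\<lambda>_. borel) X {..<k}"
    and D: "\<And>i. i < k \<Longrightarrow> distributed M lborel (X i) (\<lambda>x. ennreal (std_normal_density x))"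
    using assms(1) by (auto simp: chi_square_rv_def)
  consider "k = 0" | "k = 1" | "2 \<le> k" by linarith
  then show ?thesis
  proof cases
    case 1
    then show ?thesis by (simp add: prob_space)
  next
    case 2
    then show ?thesis using std_normal_square_tail[OF D assms(2)] by simp
  next
    case 3
    have "0 \<le> 3 * sqrt (real k) * \<epsilon>" using assms(2) by simp
    then have "1 / (3 * sqrt (real k) * \<epsilon> + 6) \<le> 1 / 6"
      by (intro frac_le) auto
    then have "1 / (3 * sqrt (real k) * \<epsilon> + 6) * exp (- real k * \<epsilon> / 2) \<le> 1 / 6 * exp (- real k * \<epsilon> / 2)"
      by (rule mult_right_mono) simp
    then show ?thesis
      using chi_square_tail_ge_two[OF indep D 3 assms(2)] by linarith
  qed
qed

end
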